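(* Let $\mathbb{K}$ be a field, $n>1$, $a=\sum_{j=0}^d c_j s^j\in\mathbb{K}[s]^n$ a non-zero row vector of degree $d$, and $A\in\mathbb{K}^{(2d+1)\times n(d+1)}$ the matrix whose $(i,\,kn+r)$ entry ($1\le i\le 2d+1$, $0\le k\le d$, $1\le r\le n$) is the $r$-th entry of $c_{i-1-k}$ (zero if $i-1-k\notin\{0,\dots,d\}$). Let $q$ be the set of non-pivotal indices of $A$. If $j\in q$, then $j+kn\in q$ for all integers $0\le k\le\left\lfloor\frac{n(d+1)-j}{n}\right\rfloor$. Moreover, if $A_{*j}=\sum_{r<j}\alpha_r A_{*r}$ with $\alpha_r\in\mathbb{K}$, then $A_{*j+kn}=\sum_{r<j}\alpha_r A_{*r+kn}$ for all such $k$.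
   Context: $A_{*j}$ denotes the $j$-th column of $A$. A column of a matrix is called pivotal if it is either the first column and non-zero, or it is linearly independent of all previous columns; the other columns are non-pivotal, and their indices are the non-pivotal indices. *)

theory Defs
  imports "HOL-Computational_Algebra.Polynomial"
begin

text \<open>A row vector a in K[s]^n is a list of n polynomials; its degree is the
maximal degree of its entries.  All row/column indices below are 1-based,
as in the paper.\<close>

definition row_degree :: "'a::zero poly list \<Rightarrow> nat" where
  "row_degree a = Max (degree ` set a)"

definition coeff_matrix :: "'a::zero poly list \<Rightarrow> nat \<Rightarrow> nat \<Rightarrow> 'a" where
  "coeff_matrix a i col =
     (let n = length a; d = row_degree a;
          k = (col - 1) div n; r = (col - 1) mod n + 1
      in if k + 1 \<le> i \<and> i - 1 - k \<le> d then coeff (a ! (r - 1)) (i - 1 - k) else 0)"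

definition in_span_prev :: "nat \<Rightarrow> (nat \<Rightarrow> nat \<Rightarrow> 'a::field) \<Rightarrow> nat \<Rightarrow> bool" where
  "in_span_prev m M j =
     (\<exists>\<alpha>::nat \<Rightarrow> 'a. \<forall>i\<in>{1..m}. M i j = (\<Sum>r=1..<j. \<alpha> r * M i r))"

definition pivotal :: "nat \<Rightarrow> (nat \<Rightarrow> nat \<Rightarrow> 'a::field) \<Rightarrow> nat \<Rightarrow> bool" where
  "pivotal m M j =
     ((j = 1 \<and> (\<exists>i\<in>{1..m}. M i 1 \<noteq> 0)) \<or> (j > 1 \<and> \<not> in_span_prev m M j))"

definition nonpivotal_indices :: "nat \<Rightarrow> nat \<Rightarrow> (nat \<Rightarrow> nat \<Rightarrow> 'a::field) \<Rightarrow> nat set" where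
  "nonpivotal_indices m N M = {j \<in> {1..N}. \<not> pivotal m M j}"

end

theory Submission
  imports Defs
begin

text \<open>The matrix is block Toeplitz: moving a column index by k blocks of width n moves the
column down by k rows, filling the top with zeros.  Hence any linear relation between a column
and earlier columns survives the shift, and a non-pivotal column stays non-pivotal.\<close>

lemma coeff_matrix_shift_col:
  assumes "a \<noteq> []" and "col \<ge> 1"
  shows "coeff_matrix a i (col + k * length a) =
         (if k < i then coeff_matrix a (i - k) col else 0)"
proof -
  let ?n = "length a"
  have col: "col + k * ?n - 1 = (col - 1) + k * ?n"
    using assms(2) by simp
  have "(col + k * ?n - 1) div ?n = (col - 1) div ?n + k"
    using assms(1) unfolding col by simp
  moreover have "(col + k * ?n - 1) mod ?n = (col - 1) mod ?n"
    unfolding col by simp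
  ultimately show ?thesis
    unfolding coeff_matrix_def Let_def by (auto simp: algebra_simps)
qed

lemma coeff_matrix_shift_col_relation:
  fixes a :: "'a::field poly list"
  assumes "a \<noteq> []" and "j \<ge> 1"
    and rel: "\<forall>i\<in>{1..m}. coeff_matrix a i j = (\<Sum>r=1..<j. \<alpha> r * coeff_matrix a i r)"
  shows "\<forall>i\<in>{1..m}. coeff_matrix a i (j + k * length a)
           = (\<Sum>r=1..<j. \<alpha> r * coeff_matrix a i (r + k * length a))"
proof
  fix i assume i: "i \<in> {1..m}"
  note shift = coeff_matrix_shift_col[OF assms(1), of _ i k]
  show "coeff_matrix a i (j + k * length a)
          = (\<Sum>r=1..<j. \<alpha> r * coeff_matrix a i (r + k * length a))"
  proof (cases "k < i")
    case True
    have "coeff_matrix a i (j + k * length a) = coeff_matrix a (i - k) j"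
      using shift assms(2) True by simp
    also have "\<dots> = (\<Sum>r=1..<j. \<alpha> r * coeff_matrix a (i - k) r)"
      using i True by (intro bspec[OF rel]) auto
    also have "\<dots> = (\<Sum>r=1..<j. \<alpha> r * coeff_matrix a i (r + k * length a))"
      using shift True by (intro sum.cong) auto
    finally show ?thesis .
  next
    case False
    then show ?thesis
      using shift assms(2) by (simp add: sum.neutral)
  qed
qed

lemma sum_shift_index_coeffs:
  fixes \<alpha> f :: "nat \<Rightarrow> 'a::semiring_0"
  shows "(\<Sum>r=1..<j. \<alpha> r * f (r + s)) =
         (\<Sum>r=1..<j+s. (if s < r then \<alpha> (r - s) else 0) * f r)"
proof -
  let ?\<beta> = "\<lambda>r. (if s < r then \<alpha> (r - s) else 0) * f r"
  have "(\<Sum>r=1..<j. \<alpha> r * f (r + s)) = sum ?\<beta> ((\<lambda>r. r + s) ` {1..<j})"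
    by (subst sum.reindex) (auto simp: inj_on_def)
  also have "\<dots> = sum ?\<beta> {1..<j+s}"
  proof (rule sum.mono_neutral_left)
    show "\<forall>r\<in>{1..<j+s} - (\<lambda>r. r + s) ` {1..<j}. ?\<beta> r = 0"
    proof
      fix r assume r: "r \<in> {1..<j+s} - (\<lambda>r. r + s) ` {1..<j}"
      have "\<not> s < r"
      proof
        assume "s < r"
        then have "r = (r - s) + s" and "r - s \<in> {1..<j}" using r by auto
        then show False using r by (metis DiffD2 imageI)
      qed
      then show "?\<beta> r = 0" by simp
    qed
  qed auto
  finally show ?thesis .
qed

lemma in_span_prev_coeff_matrix_shift:
  fixes a :: "'a::field poly list"
  assumes "a \<noteq> []" and "j \<ge> 1"
    and "in_span_prev m (coeff_matrix a) j"
  shows "in_span_prev m (coeff_matrix a) (j + k * length a)"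
proof -
  let ?s = "k * length a"
  obtain \<alpha> where
    "\<forall>i\<in>{1..m}. coeff_matrix a i j = (\<Sum>r=1..<j. \<alpha> r * coeff_matrix a i r)"
    using assms(3) unfolding in_span_prev_def by blast
  then have "\<forall>i\<in>{1..m}. coeff_matrix a i (j + ?s)
               = (\<Sum>r=1..<j. \<alpha> r * coeff_matrix a i (r + ?s))"
    by (rule coeff_matrix_shift_col_relation[OF assms(1,2)])
  then have "\<forall>i\<in>{1..m}. coeff_matrix a i (j + ?s)
               = (\<Sum>r=1..<j + ?s. (if ?s < r then \<alpha> (r - ?s) else 0) * coeff_matrix a i r)"
    by (simp only: sum_shift_index_coeffs)
  then show ?thesis
    unfolding in_span_prev_def by (rule exI[of _ "\<lambda>r. if ?s < r then \<alpha> (r - ?s) else 0"])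
qed

lemma not_pivotal_imp_in_span_prev:
  assumes "j \<ge> 1" and "\<not> pivotal m M j"
  shows "in_span_prev m M j"
proof (cases "j = 1")
  case True
  then have "\<forall>i\<in>{1..m}. M i j = (\<Sum>r=1..<j. 0 * M i r)"
    using assms(2) unfolding pivotal_def by auto
  then show ?thesis
    unfolding in_span_prev_def by (rule exI[of _ "\<lambda>_. 0"])
next
  case False
  then show ?thesis
    using assms unfolding pivotal_def by auto
qed

theorem lemma6:
  fixes a :: "'a::field poly list" and n d :: nat
  assumes "n = length a" and "n > 1"
    and "\<exists>p\<in>set a. p \<noteq> 0"
    and "d = row_degree a"
  shows "(\<forall>j \<in> nonpivotal_indices (2*d+1) (n*(d+1)) (coeff_matrix a).
            \<forall>k::nat. k \<le> (n*(d+1) - j) div n \<longrightarrow>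
              j + k*n \<in> nonpivotal_indices (2*d+1) (n*(d+1)) (coeff_matrix a))
       \<and> (\<forall>j (\<alpha>::nat \<Rightarrow> 'a). j \<in> {1..n*(d+1)} \<longrightarrow>
            (\<forall>i\<in>{1..2*d+1}. coeff_matrix a i j = (\<Sum>r=1..<j. \<alpha> r * coeff_matrix a i r)) \<longrightarrow>
            (\<forall>k::nat. k \<le> (n*(d+1) - j) div n \<longrightarrow>
              (\<forall>i\<in>{1..2*d+1}. coeff_matrix a i (j + k*n)
                   = (\<Sum>r=1..<j. \<alpha> r * coeff_matrix a i (r + k*n)))))"
proof -
  have nonempty: "a \<noteq> []"
    using assms(1,2) by auto
  show ?thesis
  proof (intro conjI ballI allI impI)
    fix j k
    assume j: "j \<in> nonpivotal_indices (2*d+1) (n*(d+1)) (coeff_matrix a)"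
      and k: "k \<le> (n*(d+1) - j) div n"
    have j_range: "j \<in> {1..n*(d+1)}" and "\<not> pivotal (2*d+1) (coeff_matrix a) j"
      using j unfolding nonpivotal_indices_def by auto
    then have "in_span_prev (2*d+1) (coeff_matrix a) j"
      by (intro not_pivotal_imp_in_span_prev) auto
    then have "in_span_prev (2*d+1) (coeff_matrix a) (j + k*n)"
      using in_span_prev_coeff_matrix_shift[OF nonempty] j_range assms(1) by auto
    moreover have "k*n \<le> n*(d+1) - j"
      using k div_times_less_eq_dividend le_trans mult_le_mono1 by blast
    moreover have "k = 0 \<or> j + k*n > 1"
      using j_range assms(2) by (cases k) auto
    ultimately show "j + k*n \<in> nonpivotal_indices (2*d+1) (n*(d+1)) (coeff_matrix a)"
      using j j_range unfolding nonpivotal_indices_def pivotal_def by auto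
  next
    fix j k and \<alpha> :: "nat \<Rightarrow> 'a" and i
    assume "j \<in> {1..n*(d+1)}"
      and "\<forall>i\<in>{1..2*d+1}. coeff_matrix a i j = (\<Sum>r=1..<j. \<alpha> r * coeff_matrix a i r)"
      and "i \<in> {1..2*d+1}"
    then show "coeff_matrix a i (j + k*n) = (\<Sum>r=1..<j. \<alpha> r * coeff_matrix a i (r + k*n))"
      using coeff_matrix_shift_col_relation[OF nonempty, of j "2*d+1" \<alpha> k] assms(1) by auto
  qed
qed

end
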